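(* Let $\mathcal{E}$ be an ellipse in a Euclidean plane, let $c$ be a chord of $\mathcal{E}$, and let $g$ be an affine bijection of the plane. Consider the three properties: (1) a chord of $\mathcal{E}$ parallel to $c$ and passing through a focus of $\mathcal{E}$ is sent by $g$ onto a chord of $g(\mathcal{E})$ passing through a focus of $g(\mathcal{E})$; (2) the length of $c$ is preserved, i.e. $g(c)$ has the same length as $c$; (3) the length of the major axis is preserved, i.e. $g(\mathcal{E})$ has the same major axis length as $\mathcal{E}$. Then any two of these three properties imply the remaining one. *)

theory Defs
  imports "HOL-Analysis.Analysis"
begin

text \<open>Circles (F1 = F2) are included.\<close>

definition ellipse :: "real^2 \<Rightarrow> real^2 \<Rightarrow> real \<Rightarrow> (real^2) set" where
  "ellipse F1 F2 l = {x. dist x F1 + dist x F2 = l}"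

definition is_ellipse :: "(real^2) set \<Rightarrow> bool" where
  "is_ellipse S \<longleftrightarrow> (\<exists>F1 F2 l. dist F1 F2 < l \<and> S = ellipse F1 F2 l)"

definition is_focus :: "(real^2) set \<Rightarrow> real^2 \<Rightarrow> bool" where
  "is_focus S F \<longleftrightarrow> (\<exists>F' l. dist F F' < l \<and> S = ellipse F F' l)"

definition major_axis_length :: "(real^2) set \<Rightarrow> real" where
  "major_axis_length S = (THE l. \<exists>F1 F2. dist F1 F2 < l \<and> S = ellipse F1 F2 l)"

definition is_chord :: "(real^2) set \<Rightarrow> real^2 \<Rightarrow> real^2 \<Rightarrow> bool" where
  "is_chord S p q \<longleftrightarrow> p \<in> S \<and> q \<in> S \<and> p \<noteq> q"

definition affine_bijection :: "(real^2 \<Rightarrow> real^2) \<Rightarrow> bool" where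
  "affine_bijection g \<longleftrightarrow> (\<exists>f b. linear f \<and> bij f \<and> g = (\<lambda>x. f x + b))"

end

(*
  Write the ellipse with foci c - e, c + e and major axis 2a as the level set
  {c + y. Q y = K} of the quadratic form Q y = a^2 |y|^2 - (e . y)^2, where K = a^2 (a^2 - |e|^2)
  is its determinant. An affine bijection x |-> f x + b maps it to an ellipse with data c', e', a'
  whose form satisfies Q' (f y) K = Q y K'; by polarisation, squared cross products then scale by
  K'/K under f.

  Since a focus lies inside the ellipse, a line through it meets the ellipse in a chord containing
  it. Hence (1) holds iff the image of the line through the focus c + e with direction d = q - p
  passes through a focus c' +- e', i.e. iff cross(f d, e')^2 = cross(f d, f e)^2. With
  cross(w, e)^2 = Q w - (a^2 - |e|^2) |w|^2 and the two scaling laws this becomes a' |d| = a |f d|.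
  As (2) says |f d| = |d| and (3) says a' = a, any two of the three properties imply the third.
*)
theory Submission
  imports Defs
begin

definition cross2 :: "real^2 \<Rightarrow> real^2 \<Rightarrow> real" where
  "cross2 w z = w$1 * z$2 - w$2 * z$1"

(* For norm e < a the ellipse with foci c - e, c + e and major axis 2a is
   {c + y. ellipse_quad a e y = ellipse_quad_det a e} (mem_ellipse_iff_ellipse_quad);
   ellipse_quad_det a e is the determinant of the form ellipse_quad a e. *)
definition ellipse_quad :: "real \<Rightarrow> real^2 \<Rightarrow> real^2 \<Rightarrow> real" where
  "ellipse_quad a e y = a\<^sup>2 * (y \<bullet> y) - (e \<bullet> y)\<^sup>2"

definition ellipse_quad_det :: "real \<Rightarrow> real^2 \<Rightarrow> real" where
  "ellipse_quad_det a e = a\<^sup>2 * (a\<^sup>2 - e \<bullet> e)"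

lemma inner_vec2: "(x::real^2) \<bullet> y = x$1 * y$1 + x$2 * y$2"
  by (simp add: inner_vec_def sum_2)

lemma cross2_sq_add_inner_sq: "(cross2 w e)\<^sup>2 + (e \<bullet> w)\<^sup>2 = (e \<bullet> e) * (w \<bullet> w)"
  by (simp add: inner_vec2 cross2_def power2_eq_square algebra_simps)

lemma cross2_minus_right: "cross2 w (- z) = - cross2 w z"
  by (simp add: cross2_def)

lemma cross2_diff_right: "cross2 w (y - z) = cross2 w y - cross2 w z"
  by (simp add: cross2_def algebra_simps)

lemma cross2_add_scaleR_self: "cross2 w (z + t *\<^sub>R w) = cross2 w z"
  by (simp add: cross2_def algebra_simps)

lemma cross2_eq_0_imp_parallel:
  assumes "w \<noteq> 0" "cross2 w y = 0"
  shows "y = ((y \<bullet> w) / (w \<bullet> w)) *\<^sub>R w"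
proof -
  have "(w \<bullet> w) *\<^sub>R y = (y \<bullet> w) *\<^sub>R w"
    using assms(2) by (simp add: vec_eq_iff forall_2 inner_vec2 cross2_def algebra_simps)
  then have "(1 / (w \<bullet> w)) *\<^sub>R ((w \<bullet> w) *\<^sub>R y) = ((y \<bullet> w) / (w \<bullet> w)) *\<^sub>R w"
    by simp
  then show ?thesis
    using assms(1) by simp
qed

lemma norm_lt_imp_sq_inner_lt:
  fixes e :: "real^2"
  assumes "norm e < a"
  shows "e \<bullet> e < a\<^sup>2"
  using assms by (metis norm_ge_zero power2_norm_eq_inner power_strict_mono zero_less_numeral)

lemma ellipse_quad_det_pos: "norm e < a \<Longrightarrow> ellipse_quad_det a e > 0"
  using norm_lt_imp_sq_inner_lt[of e a] norm_ge_zero[of e]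
  by (auto simp: ellipse_quad_det_def zero_less_mult_iff)

lemma ellipse_quad_pos:
  assumes "norm e < a" "y \<noteq> 0"
  shows "ellipse_quad a e y > 0"
proof -
  have "\<bar>e \<bullet> y\<bar> \<le> norm e * norm y"
    by (rule Cauchy_Schwarz_ineq2)
  then have "(e \<bullet> y)\<^sup>2 \<le> (norm e * norm y)\<^sup>2"
    by (metis abs_ge_zero power2_abs power_mono)
  then have "(e \<bullet> y)\<^sup>2 \<le> (e \<bullet> e) * (y \<bullet> y)"
    by (simp add: power_mult_distrib power2_norm_eq_inner)
  moreover have "(e \<bullet> e) * (y \<bullet> y) < a\<^sup>2 * (y \<bullet> y)"
    using norm_lt_imp_sq_inner_lt[OF assms(1)] assms(2) by simp
  ultimately show ?thesis
    by (simp add: ellipse_quad_def)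
qed

lemma ellipse_quad_focus_less:
  assumes "norm e < a" "z = e \<or> z = - e"
  shows "ellipse_quad a e z < ellipse_quad_det a e"
proof -
  have "ellipse_quad_det a e - ellipse_quad a e z = (a\<^sup>2 - e \<bullet> e)\<^sup>2"
    using assms(2) by (auto simp: ellipse_quad_def ellipse_quad_det_def power2_eq_square algebra_simps)
  moreover have "a\<^sup>2 - e \<bullet> e > 0"
    using norm_lt_imp_sq_inner_lt[OF assms(1)] by simp
  ultimately show ?thesis
    by (metis diff_gt_0_iff_gt zero_less_power)
qed

lemma mem_ellipse_iff_ellipse_quad:
  assumes "norm e < a"
  shows "x \<in> ellipse (c - e) (c + e) (2 * a) \<longleftrightarrow> ellipse_quad a e (x - c) = ellipse_quad_det a e"
proof -
  define y where "y = x - c"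
  define s where "s = norm (y + e)"
  define t where "t = norm (y - e)"
  have a: "a > 0"
    using assms norm_ge_zero[of e] by linarith
  have st: "s \<ge> 0" "t \<ge> 0"
    by (simp_all add: s_def t_def)
  have s2: "s\<^sup>2 = y \<bullet> y + 2 * (e \<bullet> y) + e \<bullet> e" and t2: "t\<^sup>2 = y \<bullet> y - 2 * (e \<bullet> y) + e \<bullet> e"
    by (simp_all add: s_def t_def power2_norm_eq_inner inner_add inner_diff inner_commute)
  (* Of the two factors only the first can vanish, as |s - t| <= 2 norm e < 2 a. *)
  have "((s + t)\<^sup>2 - 4 * a\<^sup>2) * ((s - t)\<^sup>2 - 4 * a\<^sup>2) = (s\<^sup>2 + t\<^sup>2 - 4 * a\<^sup>2)\<^sup>2 - 4 * s\<^sup>2 * t\<^sup>2"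
    by (simp add: power2_eq_square algebra_simps)
  also have "\<dots> = 16 * (ellipse_quad_det a e - ellipse_quad a e y)"
    unfolding s2 t2 ellipse_quad_def ellipse_quad_det_def by (simp add: power2_eq_square algebra_simps)
  finally have "((s + t)\<^sup>2 - 4 * a\<^sup>2) * ((s - t)\<^sup>2 - 4 * a\<^sup>2) = 16 * (ellipse_quad_det a e - ellipse_quad a e y)" .
  moreover have "\<bar>s - t\<bar> < 2 * a"
  proof -
    have "\<bar>s - t\<bar> \<le> norm ((y + e) - (y - e))"
      unfolding s_def t_def by (rule norm_triangle_ineq3)
    also have "\<dots> = 2 * norm e"
      by (simp flip: scaleR_2)
    finally show ?thesis
      using assms by linarith
  qed
  then have "(s - t)\<^sup>2 - 4 * a\<^sup>2 \<noteq> 0"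
    using power_strict_mono[OF \<open>\<bar>s - t\<bar> < 2 * a\<close> abs_ge_zero, of 2]
    by (simp add: power_mult_distrib)
  ultimately have "ellipse_quad a e y = ellipse_quad_det a e \<longleftrightarrow> (s + t)\<^sup>2 = (2 * a)\<^sup>2"
    by (auto simp: power_mult_distrib)
  also have "\<dots> \<longleftrightarrow> s + t = 2 * a"
    using st a by (intro power2_eq_iff_nonneg) simp_all
  finally show ?thesis
    by (simp add: ellipse_def y_def s_def t_def dist_norm algebra_simps)
qed

section \<open>Foci and major axis are determined by the ellipse\<close>

lemma ellipse_commute: "ellipse F1 F2 l = ellipse F2 F1 l"
  by (auto simp: ellipse_def)

lemma dist_le_on_ellipse:
  assumes "x \<in> ellipse F1 F2 l" "y \<in> ellipse F1 F2 l"
  shows "dist x y \<le> l"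
  using dist_triangle[of x y F1] dist_triangle[of x y F2] assms
  by (simp add: ellipse_def dist_commute)

lemma ellipse_centered_form:
  fixes F1 F2 :: "real^2"
  assumes "dist F1 F2 < l"
  shows "\<exists>c e a. norm e < a \<and> F1 = c - e \<and> F2 = c + e \<and> l = 2 * a"
proof -
  have "F1 = (1/2) *\<^sub>R (F1 + F2) - (1/2) *\<^sub>R (F2 - F1)"
       "F2 = (1/2) *\<^sub>R (F1 + F2) + (1/2) *\<^sub>R (F2 - F1)"
    by (simp_all add: vec_eq_iff field_simps)
  moreover have "norm ((1/2) *\<^sub>R (F2 - F1)) < l / 2"
    using assms by (simp add: dist_norm norm_minus_commute)
  ultimately show ?thesis
    by (metis field_sum_of_halves mult_2)
qed

lemma is_ellipse_centered_form:
  assumes "is_ellipse S"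
  shows "\<exists>c e a. norm e < a \<and> S = ellipse (c - e) (c + e) (2 * a)"
  using assms ellipse_centered_form unfolding is_ellipse_def by metis

lemma dist_foci_less:
  fixes c e :: "real^2"
  assumes "norm e < a"
  shows "dist (c - e) (c + e) < 2 * a"
  using assms by (simp add: dist_norm flip: scaleR_2)

lemma ellipse_point_reflection:
  assumes "x \<in> ellipse (c - e) (c + e) l"
  shows "2 *\<^sub>R c - x \<in> ellipse (c - e) (c + e) l"
  using assms by (simp add: ellipse_def dist_norm scaleR_2 algebra_simps norm_minus_commute)

lemma unit_vector_along:
  fixes e :: "real^2"
  obtains u where "norm u = 1" "e = (e \<bullet> u) *\<^sub>R u"
proof (cases "e = 0")
  case True
  then show ?thesis
    using that[of "axis 1 1"] by simp
next
  case False
  then show ?thesis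
    using that[of "e /\<^sub>R norm e"] by (simp add: dot_square_norm power2_eq_square field_simps)
qed

lemma ellipse_vertices:
  assumes "norm e < a" "norm u = 1" "e = k *\<^sub>R u"
  shows "c + a *\<^sub>R u \<in> ellipse (c - e) (c + e) (2 * a)"
    and "c - a *\<^sub>R u \<in> ellipse (c - e) (c + e) (2 * a)"
proof -
  have k: "\<bar>k\<bar> < a"
    using assms by simp
  have "norm ((a + k) *\<^sub>R u) + norm ((a - k) *\<^sub>R u) = 2 * a"
    using k assms(2) by simp
  then show "c + a *\<^sub>R u \<in> ellipse (c - e) (c + e) (2 * a)"
      "c - a *\<^sub>R u \<in> ellipse (c - e) (c + e) (2 * a)"
    by (simp_all add: ellipse_def dist_norm assms(3) algebra_simps norm_minus_commute)
qed

lemma ellipse_eq_imp_major_le: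
  assumes "norm e < a" "norm e2 < a2"
    and "ellipse (c - e) (c + e) (2 * a) = ellipse (c2 - e2) (c2 + e2) (2 * a2)"
  shows "a \<le> a2"
proof -
  obtain u where u: "norm u = 1" "e = (e \<bullet> u) *\<^sub>R u"
    using unit_vector_along by blast
  have "dist (c + a *\<^sub>R u) (c - a *\<^sub>R u) \<le> 2 * a2"
    using ellipse_vertices[OF assms(1) u] assms(3) dist_le_on_ellipse by metis
  moreover have "a > 0"
    using assms(1) norm_ge_zero[of e] by linarith
  then have "dist (c + a *\<^sub>R u) (c - a *\<^sub>R u) = 2 * a"
    using u(1) by (simp add: dist_norm flip: scaleR_2)
  ultimately show ?thesis
    by simp
qed

lemma translation_invariant_bounded_eq_0:
  fixes v :: "'a::real_normed_vector"
  assumes "x \<in> S" "\<And>y. y \<in> S \<Longrightarrow> y + v \<in> S" "\<And>y z. y \<in> S \<Longrightarrow> z \<in> S \<Longrightarrow> dist y z \<le> l"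
  shows "v = 0"
proof (rule ccontr)
  assume "v \<noteq> 0"
  have orbit: "x + of_nat n *\<^sub>R v \<in> S" for n
  proof (induction n)
    case (Suc n)
    then show ?case
      using assms(2)[OF Suc] by (simp add: algebra_simps)
  qed (use assms in simp)
  obtain n :: nat where "l < of_nat n * norm v"
    using \<open>v \<noteq> 0\<close> by (meson ex_less_of_nat_mult zero_less_norm_iff)
  moreover have "dist x (x + of_nat n *\<^sub>R v) = of_nat n * norm v"
    by (simp add: dist_norm)
  ultimately show False
    using assms(3)[OF assms(1) orbit[of n]] by linarith
qed

lemma ellipse_eq_imp_center_eq:
  assumes "norm e < a" "norm e2 < a2"
    and S: "ellipse (c - e) (c + e) (2 * a) = ellipse (c2 - e2) (c2 + e2) (2 * a2)"
  shows "c2 = c"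
proof -
  obtain u where u: "norm u = 1" "e = (e \<bullet> u) *\<^sub>R u"
    using unit_vector_along by blast
  (* The point reflections in c and in c2 both preserve the ellipse; their composite is a translation. *)
  have "2 *\<^sub>R (c - c2) = 0"
  proof (rule translation_invariant_bounded_eq_0)
    show "c + a *\<^sub>R u \<in> ellipse (c - e) (c + e) (2 * a)"
      using ellipse_vertices(1)[OF assms(1) u] .
    show "y + 2 *\<^sub>R (c - c2) \<in> ellipse (c - e) (c + e) (2 * a)"
      if "y \<in> ellipse (c - e) (c + e) (2 * a)" for y
    proof -
      have "2 *\<^sub>R c2 - y \<in> ellipse (c - e) (c + e) (2 * a)"
        using ellipse_point_reflection[of y c2 e2] that S by simp
      then have "2 *\<^sub>R c - (2 *\<^sub>R c2 - y) \<in> ellipse (c - e) (c + e) (2 * a)"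
        by (rule ellipse_point_reflection)
      then show ?thesis
        by (simp add: algebra_simps)
    qed
    show "dist y z \<le> 2 * a"
      if "y \<in> ellipse (c - e) (c + e) (2 * a)" "z \<in> ellipse (c - e) (c + e) (2 * a)" for y z
      using that by (rule dist_le_on_ellipse)
  qed
  then show ?thesis
    by simp
qed

lemma ellipse_eq_imp_focal_vector_eq:
  assumes "norm e < a" "norm e2 < a"
    and S: "ellipse (c - e) (c + e) (2 * a) = ellipse (c - e2) (c + e2) (2 * a)"
  shows "e2 = e \<or> e2 = - e"
proof -
  have a: "a > 0"
    using assms(1) norm_ge_zero[of e] by linarith
  have Q: "ellipse_quad a e y = ellipse_quad_det a e \<longleftrightarrow> ellipse_quad a e2 y = ellipse_quad_det a e2" for y
    using mem_ellipse_iff_ellipse_quad[OF assms(1), of "c + y" c]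
      mem_ellipse_iff_ellipse_quad[OF assms(2), of "c + y" c] S by simp
  obtain u where u: "norm u = 1" "e = (e \<bullet> u) *\<^sub>R u"
    using unit_vector_along by blast
  have uu: "u \<bullet> u = 1"
    using u(1) by (simp add: power2_norm_eq_inner [symmetric])
  have eu: "(e \<bullet> u)\<^sup>2 = e \<bullet> e"
    by (subst (2 3) u(2)) (simp add: uu power2_eq_square)
  define w where "w = (vector [- (u$2), u$1] :: real^2)"
  have ww: "w \<bullet> w = 1" and wu: "u \<bullet> w = 0"
    using uu by (simp_all add: w_def inner_vec2 algebra_simps)
  (* The major vertex a u lies on the second ellipse, so e2 is parallel to u. *)
  have "ellipse_quad a e (a *\<^sub>R u) = ellipse_quad_det a e"
    using eu uu by (simp add: ellipse_quad_def ellipse_quad_det_def power_mult_distrib algebra_simps eval_nat_numeral)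
  then have "a\<^sup>2 * (e2 \<bullet> u)\<^sup>2 = a\<^sup>2 * (e2 \<bullet> e2)"
    using Q[of "a *\<^sub>R u"] uu a
    by (simp add: ellipse_quad_def ellipse_quad_det_def power_mult_distrib algebra_simps eval_nat_numeral)
  then have k: "(e2 \<bullet> u)\<^sup>2 = e2 \<bullet> e2"
    using a by simp
  have "(e2 - (e2 \<bullet> u) *\<^sub>R u) \<bullet> (e2 - (e2 \<bullet> u) *\<^sub>R u) = 0"
    using k uu by (simp add: inner_diff inner_commute power2_eq_square)
  then have e2u: "e2 = (e2 \<bullet> u) *\<^sub>R u"
    by simp
  (* The minor vertex b w lies on the second ellipse, so e2 has the length of e. *)
  define b where "b = sqrt (a\<^sup>2 - e \<bullet> e)"
  have b: "b\<^sup>2 = a\<^sup>2 - e \<bullet> e"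
    using norm_lt_imp_sq_inner_lt[OF assms(1)] by (simp add: b_def)
  have ew: "e \<bullet> w = 0" "e2 \<bullet> w = 0"
    by (subst u(2), simp add: wu) (subst e2u, simp add: wu)
  have "ellipse_quad a e (b *\<^sub>R w) = ellipse_quad_det a e"
    using ww ew b by (simp add: ellipse_quad_def ellipse_quad_det_def power_mult_distrib power2_eq_square)
  then have "ellipse_quad a e2 (b *\<^sub>R w) = ellipse_quad_det a e2"
    using Q by blast
  then have "b\<^sup>2 = a\<^sup>2 - e2 \<bullet> e2"
    using ww ew a by (simp add: ellipse_quad_def ellipse_quad_det_def power_mult_distrib power2_eq_square)
  then have "(e2 \<bullet> u)\<^sup>2 = (e \<bullet> u)\<^sup>2"
    using a b k eu by simp
  then have "e2 \<bullet> u = e \<bullet> u \<or> e2 \<bullet> u = - (e \<bullet> u)"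
    by (simp add: power2_eq_iff)
  then show ?thesis
    using e2u u(2) by (metis scaleR_minus_left)
qed

lemma ellipse_eq_iff_same_foci:
  assumes "norm e < a" "dist F1 F2 < l"
  shows "ellipse (c - e) (c + e) (2 * a) = ellipse F1 F2 l \<longleftrightarrow>
           l = 2 * a \<and> (F1 = c - e \<and> F2 = c + e \<or> F1 = c + e \<and> F2 = c - e)"
proof
  assume S: "ellipse (c - e) (c + e) (2 * a) = ellipse F1 F2 l"
  obtain c2 e2 a2 where r: "norm e2 < a2" "F1 = c2 - e2" "F2 = c2 + e2" "l = 2 * a2"
    using ellipse_centered_form[OF assms(2)] by blast
  have "a \<le> a2" "a2 \<le> a"
    using ellipse_eq_imp_major_le[OF assms(1) r(1), of c c2] ellipse_eq_imp_major_le[OF r(1) assms(1), of c2 c] S r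
    by simp_all
  then have a2: "a2 = a"
    by simp
  have c2: "c2 = c"
    using ellipse_eq_imp_center_eq[OF assms(1) r(1)] S r by simp
  have S': "ellipse (c - e) (c + e) (2 * a) = ellipse (c - e2) (c + e2) (2 * a)"
    using S r a2 c2 by simp
  have "e2 = e \<or> e2 = - e"
    using ellipse_eq_imp_focal_vector_eq[OF assms(1) _ S'] r(1) a2 by simp
  then show "l = 2 * a \<and> (F1 = c - e \<and> F2 = c + e \<or> F1 = c + e \<and> F2 = c - e)"
    using r a2 c2 by auto
next
  assume "l = 2 * a \<and> (F1 = c - e \<and> F2 = c + e \<or> F1 = c + e \<and> F2 = c - e)"
  then show "ellipse (c - e) (c + e) (2 * a) = ellipse F1 F2 l"
    using ellipse_commute by blast
qed

lemma major_axis_length_ellipse: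
  assumes "norm e < a"
  shows "major_axis_length (ellipse (c - e) (c + e) (2 * a)) = 2 * a"
  unfolding major_axis_length_def
proof (rule the_equality)
  show "\<exists>F1 F2. dist F1 F2 < 2 * a \<and> ellipse (c - e) (c + e) (2 * a) = ellipse F1 F2 (2 * a)"
    using dist_foci_less[OF assms] by blast
  show "l = 2 * a" if "\<exists>F1 F2. dist F1 F2 < l \<and> ellipse (c - e) (c + e) (2 * a) = ellipse F1 F2 l" for l
    using that ellipse_eq_iff_same_foci[OF assms] by blast
qed

lemma is_focus_ellipse_iff:
  assumes "norm e < a"
  shows "is_focus (ellipse (c - e) (c + e) (2 * a)) F \<longleftrightarrow> F = c - e \<or> F = c + e"
  using ellipse_eq_iff_same_foci[OF assms] dist_foci_less[OF assms, of c] ellipse_commute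
  unfolding is_focus_def by (metis dist_commute)

section \<open>Affine images of ellipses\<close>

lemma binary_form_eigenvalues:
  fixes p r w :: real
  assumes p: "p > 0" and det: "p * w - r\<^sup>2 > 0"
  obtains l1 l2 where "l1 > 0" "l2 \<ge> p" "l2 \<ge> w" "l1 * l2 = p * w - r\<^sup>2" "l1 + l2 = p + w"
    "(l2 - p) * (l2 - w) = r\<^sup>2"
proof
  define D where "D = sqrt ((p - w)\<^sup>2 + 4 * r\<^sup>2)"
  have D2: "D\<^sup>2 = (p - w)\<^sup>2 + 4 * r\<^sup>2"
    by (simp add: D_def)
  have "p * w > 0"
    using det zero_le_power2[of r] by linarith
  then have w: "w > 0"
    using p by (simp add: zero_less_mult_iff)
  show l12: "(p + w - D) / 2 * ((p + w + D) / 2) = p * w - r\<^sup>2"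
    using D2 by (simp add: field_simps power2_eq_square)
  have "D \<ge> 0"
    by (simp add: D_def)
  then have "(p + w + D) / 2 > 0"
    using p w by simp
  then show "(p + w - D) / 2 > 0"
    using l12 det by (metis zero_less_mult_pos2)
  have "\<bar>p - w\<bar> \<le> D"
    unfolding D_def by (rule real_le_rsqrt) simp
  then show "(p + w + D) / 2 \<ge> p" "(p + w + D) / 2 \<ge> w"
    by (auto simp: abs_le_iff)
  show "(p + w - D) / 2 + (p + w + D) / 2 = p + w"
    by (simp add: field_simps)
  show "((p + w + D) / 2 - p) * ((p + w + D) / 2 - w) = r\<^sup>2"
    using D2 by (simp add: field_simps power2_eq_square)
qed

lemma pos_def_binary_form_eq_ellipse_quad:
  fixes p r w :: real
  assumes p: "p > 0" and det: "p * w - r\<^sup>2 > 0"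
  shows "\<exists>e a. norm e < a \<and>
           (\<forall>z::real^2. ellipse_quad a e z = (p * (z$1)\<^sup>2 + 2 * r * z$1 * z$2 + w * (z$2)\<^sup>2) * ellipse_quad_det a e)"
proof -
  define \<delta> where "\<delta> = p * w - r\<^sup>2"
  have \<delta>: "\<delta> > 0"
    using det by (simp add: \<delta>_def)
  obtain l1 l2 where l: "l1 > 0" "l2 \<ge> p" "l2 \<ge> w" "l1 * l2 = \<delta>" "l1 + l2 = p + w"
      and l2r: "(l2 - p) * (l2 - w) = r\<^sup>2"
    using binary_form_eigenvalues[OF p det] unfolding \<delta>_def by metis
  have "l2 > 0"
    using l(2) p by linarith
  have l2pw: "l2 - p \<ge> 0" "l2 - w \<ge> 0"
    using l by simp_all
  (* the semi-axes a, b of the ellipse satisfy a^2 = l2 / \<delta> and b^2 = l1 / \<delta> *)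
  define e1 where "e1 = sqrt ((l2 - p) / \<delta>)"
  define e2 where "e2 = (if r \<ge> 0 then -1 else 1) * sqrt ((l2 - w) / \<delta>)"
  define e where "e = (vector [e1, e2] :: real^2)"
  define a where "a = sqrt (l2 / \<delta>)"
  have e1: "e1\<^sup>2 = (l2 - p) / \<delta>" and e2: "e2\<^sup>2 = (l2 - w) / \<delta>"
    using l2pw \<delta> by (simp_all add: e1_def e2_def power_mult_distrib)
  have e12: "e1 * e2 = - r / \<delta>"
  proof -
    have "e1 * e2 = (if r \<ge> 0 then -1 else 1) * sqrt (((l2 - p) / \<delta>) * ((l2 - w) / \<delta>))"
      unfolding e1_def e2_def real_sqrt_mult by (simp only: mult_ac)
    also have "((l2 - p) / \<delta>) * ((l2 - w) / \<delta>) = (r / \<delta>)\<^sup>2"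
      using l2r by (simp add: field_simps power2_eq_square)
    finally show ?thesis
      using \<delta> by (simp add: abs_if divide_less_0_iff)
  qed
  have a2: "a\<^sup>2 = l2 / \<delta>"
    using \<open>l2 > 0\<close> \<delta> by (simp add: a_def)
  have ee: "e \<bullet> e = e1\<^sup>2 + e2\<^sup>2"
    by (simp add: e_def inner_vec2 power2_eq_square)
  have "a\<^sup>2 - e \<bullet> e = (l2 - (l2 - p) - (l2 - w)) / \<delta>"
    unfolding ee e1 e2 a2 by (simp add: diff_divide_distrib)
  also have "l2 - (l2 - p) - (l2 - w) = l1"
    using l(5) by linarith
  finally have minor: "a\<^sup>2 - e \<bullet> e = l1 / \<delta>" .
  have "l1 / \<delta> > 0"
    using l(1) \<delta> by simp
  then have "e \<bullet> e < a\<^sup>2"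
    using minor by linarith
  then have "norm e < a"
    using a2 \<open>l2 > 0\<close> \<delta> by (simp add: a_def norm_eq_sqrt_inner real_sqrt_less_iff)
  moreover have "ellipse_quad_det a e = 1 / \<delta>"
  proof -
    have "ellipse_quad_det a e = (l1 * l2) / (\<delta> * \<delta>)"
      unfolding ellipse_quad_det_def minor unfolding a2 by simp
    then show ?thesis
      using l(4) \<delta> by simp
  qed
  moreover have "ellipse_quad a e z = (p * (z$1)\<^sup>2 + 2 * r * z$1 * z$2 + w * (z$2)\<^sup>2) / \<delta>" for z :: "real^2"
  proof -
    have "ellipse_quad a e z = (a\<^sup>2 - e1\<^sup>2) * (z$1)\<^sup>2 - 2 * (e1 * e2) * z$1 * z$2 + (a\<^sup>2 - e2\<^sup>2) * (z$2)\<^sup>2"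
      by (simp add: ellipse_quad_def e_def inner_vec2 power2_eq_square algebra_simps)
    then show ?thesis
      unfolding e1 e2 e12 a2 using \<delta> by (simp add: field_simps)
  qed
  ultimately show ?thesis
    by (metis divide_inverse inverse_eq_divide)
qed

lemma ellipse_quad_linear_pullback:
  fixes f :: "real^2 \<Rightarrow> real^2"
  assumes "norm e < a" "linear f" "bij f"
  shows "\<exists>e' a'. norm e' < a' \<and>
           (\<forall>y. ellipse_quad a' e' (f y) * ellipse_quad_det a e = ellipse_quad a e y * ellipse_quad_det a' e')"
proof -
  define h where "h = inv f"
  have h: "linear h" "\<And>y. h (f y) = y"
    using assms(2,3) by (auto simp: h_def bij_is_inj inj_linear_imp_inv_linear)
  have h0: "h z \<noteq> 0" if "z \<noteq> 0" for z
    using that linear_0[OF assms(2)] bij_inv_eq_iff[OF assms(3)] by (metis h_def)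
  define K where "K = ellipse_quad_det a e"
  have K: "K > 0"
    using ellipse_quad_det_pos[OF assms(1)] by (simp add: K_def)
  define u where "u = h (axis 1 1)"
  define v where "v = h (axis 2 1)"
  define p where "p = ellipse_quad a e u / K"
  define r where "r = (a\<^sup>2 * (u \<bullet> v) - (e \<bullet> u) * (e \<bullet> v)) / K"
  define w where "w = ellipse_quad a e v / K"
  have hz: "h z = z$1 *\<^sub>R u + z$2 *\<^sub>R v" for z :: "real^2"
  proof -
    have "z = z$1 *\<^sub>R axis 1 1 + z$2 *\<^sub>R axis 2 1"
      by (simp add: vec_eq_iff forall_2 axis_def)
    then show ?thesis
      by (metis u_def v_def linear_add[OF h(1)] linear_scale[OF h(1)])
  qed
  have form: "ellipse_quad a e (h z) / K = p * (z$1)\<^sup>2 + 2 * r * z$1 * z$2 + w * (z$2)\<^sup>2" for z :: "real^2"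
    unfolding hz p_def r_def w_def using K
    by (simp add: ellipse_quad_def inner_add inner_commute field_simps power2_eq_square)
  have pos: "p * (z$1)\<^sup>2 + 2 * r * z$1 * z$2 + w * (z$2)\<^sup>2 > 0" if "z \<noteq> 0" for z :: "real^2"
    using form[of z] ellipse_quad_pos[OF assms(1) h0[OF that]] K by (metis divide_pos_pos)
  have "axis 1 1 \<noteq> (0::real^2)"
    by (simp add: axis_eq_0_iff)
  then have p: "p > 0"
    using pos[of "axis 1 1"] by (simp add: axis_def)
  have "p * (p * w - r\<^sup>2) > 0"
    using pos[of "vector [r, - p]"] p by (simp add: vec_eq_iff forall_2 power2_eq_square algebra_simps)
  then have "p * w - r\<^sup>2 > 0"
    using p by (simp add: zero_less_mult_iff)
  then obtain e' a' where "norm e' < a'" and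
      e'a': "\<And>z::real^2. ellipse_quad a' e' z = (p * (z$1)\<^sup>2 + 2 * r * z$1 * z$2 + w * (z$2)\<^sup>2) * ellipse_quad_det a' e'"
    using pos_def_binary_form_eq_ellipse_quad[OF p] by blast
  moreover have "ellipse_quad a' e' (f y) * K = ellipse_quad a e y * ellipse_quad_det a' e'" for y
    using e'a'[of "f y"] form[of "f y"] K by (simp add: h(2) field_simps)
  ultimately show ?thesis
    unfolding K_def by blast
qed

lemma affine_image_ellipse:
  fixes f :: "real^2 \<Rightarrow> real^2"
  assumes "norm e < a" "norm e' < a'" "linear f" "bij f"
    and "\<And>y. ellipse_quad a' e' (f y) * ellipse_quad_det a e = ellipse_quad a e y * ellipse_quad_det a' e'"
  shows "(\<lambda>x. f x + b) ` ellipse (c - e) (c + e) (2 * a) = ellipse (f c + b - e') (f c + b + e') (2 * a')"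
proof -
  have iff: "ellipse_quad a' e' (f y) = ellipse_quad_det a' e' \<longleftrightarrow> ellipse_quad a e y = ellipse_quad_det a e" for y
  proof -
    have K: "ellipse_quad_det a e > 0" "ellipse_quad_det a' e' > 0"
      using ellipse_quad_det_pos assms(1,2) by blast+
    have "ellipse_quad a' e' (f y) = ellipse_quad_det a' e' \<longleftrightarrow>
          ellipse_quad a' e' (f y) * ellipse_quad_det a e = ellipse_quad_det a' e' * ellipse_quad_det a e"
      using K by simp
    also have "\<dots> \<longleftrightarrow> ellipse_quad a e y * ellipse_quad_det a' e' = ellipse_quad_det a e * ellipse_quad_det a' e'"
      unfolding assms(5) by (simp only: mult.commute)
    also have "\<dots> \<longleftrightarrow> ellipse_quad a e y = ellipse_quad_det a e"
      using K by simp
    finally show ?thesis .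
  qed
  have shift: "f x + b - (f c + b) = f (x - c)" for x
    by (simp add: linear_diff[OF assms(3)])
  have "(\<lambda>x. f x + b) ` ellipse (c - e) (c + e) (2 * a) \<subseteq> ellipse (f c + b - e') (f c + b + e') (2 * a')"
  proof
    fix y
    assume "y \<in> (\<lambda>x. f x + b) ` ellipse (c - e) (c + e) (2 * a)"
    then obtain x where "x \<in> ellipse (c - e) (c + e) (2 * a)" "y = f x + b"
      by blast
    then show "y \<in> ellipse (f c + b - e') (f c + b + e') (2 * a')"
      using shift[of x] iff[of "x - c"]
      by (simp add: mem_ellipse_iff_ellipse_quad[OF assms(1)] mem_ellipse_iff_ellipse_quad[OF assms(2)])
  qed
  moreover have "y \<in> (\<lambda>x. f x + b) ` ellipse (c - e) (c + e) (2 * a)" if "y \<in> ellipse (f c + b - e') (f c + b + e') (2 * a')" for y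
  proof -
    obtain x where x: "f x = y - b"
      using bij_pointE[OF assms(4)] by metis
    have "x \<in> ellipse (c - e) (c + e) (2 * a)"
      using that x shift[of x] iff[of "x - c"]
      by (simp add: mem_ellipse_iff_ellipse_quad[OF assms(1)] mem_ellipse_iff_ellipse_quad[OF assms(2)])
    then show ?thesis
      by (rule rev_image_eqI) (simp add: x)
  qed
  ultimately show ?thesis
    by blast
qed

lemma ellipse_quad_polar_identity:
  "(ellipse_quad a e (z + w) - ellipse_quad a e z - ellipse_quad a e w)\<^sup>2
     - 4 * ellipse_quad a e z * ellipse_quad a e w = - 4 * ellipse_quad_det a e * (cross2 z w)\<^sup>2"
  by (simp add: ellipse_quad_def ellipse_quad_det_def cross2_def inner_vec2 power2_eq_square algebra_simps)

lemma cross2_sq_linear_image: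
  fixes f :: "real^2 \<Rightarrow> real^2"
  assumes "norm e < a" "norm e' < a'" "linear f"
    and rel: "\<And>y. ellipse_quad a' e' (f y) * ellipse_quad_det a e = ellipse_quad a e y * ellipse_quad_det a' e'"
  shows "(cross2 (f z) (f w))\<^sup>2 * ellipse_quad_det a e = (cross2 z w)\<^sup>2 * ellipse_quad_det a' e'"
proof -
  (* By polarisation f scales the bilinear forms by K'/K, and the polar identity expresses
     the squared cross product through them. *)
  define K where "K = ellipse_quad_det a e"
  define K' where "K' = ellipse_quad_det a' e'"
  have K: "K > 0" "K' > 0"
    using ellipse_quad_det_pos assms(1,2) by (auto simp: K_def K'_def)
  define k where "k = K' / K"
  have Q': "ellipse_quad a' e' (f y) = k * ellipse_quad a e y" for y
    using rel[of y] K by (simp add: k_def K_def K'_def field_simps)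
  have "- 4 * K' * (cross2 (f z) (f w))\<^sup>2
          = k\<^sup>2 * ((ellipse_quad a e (z + w) - ellipse_quad a e z - ellipse_quad a e w)\<^sup>2
                    - 4 * ellipse_quad a e z * ellipse_quad a e w)"
    using ellipse_quad_polar_identity[of a' e' "f z" "f w"]
    by (simp add: K'_def Q' linear_add[OF assms(3), symmetric] power2_eq_square algebra_simps)
  also have "\<dots> = - 4 * k\<^sup>2 * K * (cross2 z w)\<^sup>2"
    by (simp add: ellipse_quad_polar_identity K_def)
  finally have "K' * (cross2 (f z) (f w))\<^sup>2 * K = K' * ((cross2 z w)\<^sup>2 * K')"
    using K by (simp add: k_def power2_eq_square field_simps)
  then show ?thesis
    using K by (simp add: K_def K'_def)
qed

section \<open>Chords through interior points\<close>

lemma ellipse_quad_line: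
  "ellipse_quad a e (z + t *\<^sub>R w)
     = ellipse_quad a e z + 2 * t * (a\<^sup>2 * (z \<bullet> w) - (e \<bullet> z) * (e \<bullet> w)) + t\<^sup>2 * ellipse_quad a e w"
  by (simp add: ellipse_quad_def inner_add inner_commute power2_eq_square algebra_simps)

lemma quadratic_roots_of_neg_constant:
  fixes A B C :: real
  assumes "A > 0" "C < 0"
  obtains t1 t2 where "t1 < 0" "0 < t2" "A * t1\<^sup>2 + 2 * B * t1 + C = 0" "A * t2\<^sup>2 + 2 * B * t2 + C = 0"
proof -
  define D where "D = B\<^sup>2 - A * C"
  have "D > B\<^sup>2"
    using assms by (simp add: D_def mult_pos_neg)
  moreover have "0 \<le> D"
    using calculation zero_le_power2[of B] by linarith
  ultimately have sD: "sqrt D > \<bar>B\<bar>" "(sqrt D)\<^sup>2 = D"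
    by (auto simp: real_less_rsqrt)
  show ?thesis
  proof
    show "(- B - sqrt D) / A < 0" "0 < (- B + sqrt D) / A"
      using sD(1) assms(1) by (auto simp: divide_less_0_iff abs_less_iff)
    show "A * ((- B - sqrt D) / A)\<^sup>2 + 2 * B * ((- B - sqrt D) / A) + C = 0"
         "A * ((- B + sqrt D) / A)\<^sup>2 + 2 * B * ((- B + sqrt D) / A) + C = 0"
      using assms(1) sD(2) by (simp_all add: D_def field_simps power2_eq_square)
  qed
qed

lemma quadratic_roots_product:
  fixes A B C t1 t2 :: real
  assumes "A * t1\<^sup>2 + 2 * B * t1 + C = 0" "A * t2\<^sup>2 + 2 * B * t2 + C = 0" "t1 \<noteq> t2"
  shows "A * t1 * t2 = C"
proof -
  have "(t1 - t2) * (A * (t1 + t2) + 2 * B) = 0"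
    using assms(1,2) by (simp add: algebra_simps power2_eq_square)
  then have sum: "2 * B = - A * (t1 + t2)"
    using assms(3) by simp
  have "C = - A * t1\<^sup>2 - (2 * B) * t1"
    using assms(1) by simp
  also have "\<dots> = A * t1 * t2"
    unfolding sum by (simp add: algebra_simps power2_eq_square)
  finally show ?thesis
    by simp
qed

lemma closed_segment_along_line:
  fixes x w :: "'a::real_vector"
  shows "closed_segment (x + t1 *\<^sub>R w) (x + t2 *\<^sub>R w) = (\<lambda>s. x + s *\<^sub>R w) ` closed_segment t1 t2"
proof -
  have "closed_segment (t1 *\<^sub>R w) (t2 *\<^sub>R w) = (\<lambda>s. s *\<^sub>R w) ` closed_segment t1 t2"
    by (rule closed_segment_linear_image) (rule linear_scaleR_left)
  then show ?thesis
    by (simp add: closed_segment_translation image_image)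
qed

lemma mem_ellipse_line_iff:
  assumes "norm e < a"
  shows "c + z + s *\<^sub>R w \<in> ellipse (c - e) (c + e) (2 * a) \<longleftrightarrow>
           ellipse_quad a e w * s\<^sup>2 + 2 * (a\<^sup>2 * (z \<bullet> w) - (e \<bullet> z) * (e \<bullet> w)) * s
             + (ellipse_quad a e z - ellipse_quad_det a e) = 0"
proof -
  have shift: "c + z + s *\<^sub>R w - c = z + s *\<^sub>R w"
    by simp
  show ?thesis
    unfolding mem_ellipse_iff_ellipse_quad[OF assms] shift ellipse_quad_line by (simp add: algebra_simps)
qed

lemma line_through_interior_meets_ellipse:
  assumes "norm e < a" "ellipse_quad a e z < ellipse_quad_det a e" "w \<noteq> 0"
  obtains s1 s2 where "s1 \<noteq> s2"
    "c + z + s1 *\<^sub>R w \<in> ellipse (c - e) (c + e) (2 * a)" "c + z + s2 *\<^sub>R w \<in> ellipse (c - e) (c + e) (2 * a)"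
proof -
  obtain t1 t2 where t: "t1 < 0" "0 < t2"
    "ellipse_quad a e w * t1\<^sup>2 + 2 * (a\<^sup>2 * (z \<bullet> w) - (e \<bullet> z) * (e \<bullet> w)) * t1
       + (ellipse_quad a e z - ellipse_quad_det a e) = 0"
    "ellipse_quad a e w * t2\<^sup>2 + 2 * (a\<^sup>2 * (z \<bullet> w) - (e \<bullet> z) * (e \<bullet> w)) * t2
       + (ellipse_quad a e z - ellipse_quad_det a e) = 0"
    using quadratic_roots_of_neg_constant ellipse_quad_pos[OF assms(1,3)] assms(2)
    by (metis diff_less_0_iff_less)
  show ?thesis
  proof
    show "t1 \<noteq> t2"
      using t by simp
    show "c + z + t1 *\<^sub>R w \<in> ellipse (c - e) (c + e) (2 * a)" "c + z + t2 *\<^sub>R w \<in> ellipse (c - e) (c + e) (2 * a)"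
      using t(3,4) by (simp_all add: mem_ellipse_line_iff[OF assms(1)])
  qed
qed

lemma interior_point_in_chord:
  assumes "norm e < a" "ellipse_quad a e z < ellipse_quad_det a e" "w \<noteq> 0" "s1 \<noteq> s2"
    and "c + z + s1 *\<^sub>R w \<in> ellipse (c - e) (c + e) (2 * a)" "c + z + s2 *\<^sub>R w \<in> ellipse (c - e) (c + e) (2 * a)"
  shows "c + z \<in> closed_segment (c + z + s1 *\<^sub>R w) (c + z + s2 *\<^sub>R w)"
proof -
  have "ellipse_quad a e w * s\<^sup>2 + 2 * (a\<^sup>2 * (z \<bullet> w) - (e \<bullet> z) * (e \<bullet> w)) * s
          + (ellipse_quad a e z - ellipse_quad_det a e) = 0"
    if "c + z + s *\<^sub>R w \<in> ellipse (c - e) (c + e) (2 * a)" for s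
    using that by (simp add: mem_ellipse_line_iff[OF assms(1)])
  from quadratic_roots_product[OF this this assms(4)] assms(5,6)
  have "ellipse_quad a e w * s1 * s2 < 0"
    using assms(2) by simp
  then have "s1 * s2 < 0"
    using ellipse_quad_pos[OF assms(1,3)] by (simp add: mult.assoc zero_less_mult_iff mult_less_0_iff)
  then have "0 \<in> closed_segment s1 s2"
    by (auto simp: closed_segment_eq_real_ivl mult_less_0_iff)
  then show ?thesis
    unfolding closed_segment_along_line by force
qed

section \<open>Focal chords under affine bijections\<close>

lemma closed_segment_affine_image:
  fixes f :: "'a::real_vector \<Rightarrow> 'b::real_vector"
  assumes "linear f"
  shows "closed_segment (f u + b) (f v + b) = (\<lambda>x. f x + b) ` closed_segment u v"
  using closed_segment_translation[of b "f u" "f v"] closed_segment_linear_image[OF assms, of u v]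
  by (simp add: add.commute image_image)

lemma point_of_chord_param:
  fixes u v F d :: "'a::real_vector"
  assumes "F \<in> closed_segment u v" "v - u = t *\<^sub>R d" "u \<noteq> v"
  obtains s1 s2 where "s1 \<noteq> s2" "u = F + s1 *\<^sub>R d" "v = F + s2 *\<^sub>R d"
proof -
  obtain \<mu> where F: "F = (1 - \<mu>) *\<^sub>R u + \<mu> *\<^sub>R v"
    using assms(1) by (auto simp: in_segment)
  have v: "v = u + t *\<^sub>R d"
    using assms(2) by (simp add: algebra_simps)
  show ?thesis
  proof
    show "- (\<mu> * t) \<noteq> (1 - \<mu>) * t"
      using assms(3) v by (auto simp: algebra_simps)
    show "u = F + (- (\<mu> * t)) *\<^sub>R d" "v = F + ((1 - \<mu>) * t) *\<^sub>R d"
      by (simp_all add: F v algebra_simps)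
  qed
qed

lemma cross2_sq_eq_imp_on_parallel:
  assumes "w \<noteq> 0" "(cross2 w y)\<^sup>2 = (cross2 w e)\<^sup>2"
  obtains z \<kappa> where "z = e \<or> z = - e" "y = z + \<kappa> *\<^sub>R w"
proof -
  obtain z where z: "z = e \<or> z = - e" "cross2 w (y - z) = 0"
    using assms(2) unfolding power2_eq_iff
    by (metis cross2_diff_right cross2_minus_right diff_self)
  show ?thesis
    using that[OF z(1), of "((y - z) \<bullet> w) / (w \<bullet> w)"] cross2_eq_0_imp_parallel[OF assms(1) z(2)]
    by (simp add: algebra_simps)
qed

definition preserves_focal_chords :: "(real^2 \<Rightarrow> real^2) \<Rightarrow> (real^2) set \<Rightarrow> real^2 \<Rightarrow> bool" where
  "preserves_focal_chords g E d \<longleftrightarrow>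
     (\<forall>u v F. is_chord E u v \<and> (\<exists>t. v - u = t *\<^sub>R d) \<and> is_focus E F \<and> F \<in> closed_segment u v
        \<longrightarrow> (\<exists>F'. is_focus (g ` E) F' \<and> F' \<in> g ` closed_segment u v))"

lemma preserves_focal_chords_imp_cross2:
  fixes f :: "real^2 \<Rightarrow> real^2"
  assumes ne: "norm e < a" "norm e' < a'" and f: "linear f" and d: "d \<noteq> 0"
    and img: "(\<lambda>x. f x + b) ` ellipse (c - e) (c + e) (2 * a) = ellipse (f c + b - e') (f c + b + e') (2 * a')"
    and pres: "preserves_focal_chords (\<lambda>x. f x + b) (ellipse (c - e) (c + e) (2 * a)) d"
  shows "(cross2 (f d) e')\<^sup>2 = (cross2 (f d) (f e))\<^sup>2"
proof -
  obtain s1 s2 where s: "s1 \<noteq> s2" "c + e + s1 *\<^sub>R d \<in> ellipse (c - e) (c + e) (2 * a)"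
      "c + e + s2 *\<^sub>R d \<in> ellipse (c - e) (c + e) (2 * a)"
    using line_through_interior_meets_ellipse[OF ne(1) ellipse_quad_focus_less[OF ne(1)] d] by blast
  have "is_chord (ellipse (c - e) (c + e) (2 * a)) (c + e + s1 *\<^sub>R d) (c + e + s2 *\<^sub>R d)"
    using s d by (simp add: is_chord_def)
  moreover have "(c + e + s2 *\<^sub>R d) - (c + e + s1 *\<^sub>R d) = (s2 - s1) *\<^sub>R d"
    by (simp add: algebra_simps)
  moreover have "is_focus (ellipse (c - e) (c + e) (2 * a)) (c + e)"
    using is_focus_ellipse_iff[OF ne(1)] by blast
  moreover have "c + e \<in> closed_segment (c + e + s1 *\<^sub>R d) (c + e + s2 *\<^sub>R d)"
    using interior_point_in_chord[OF ne(1) ellipse_quad_focus_less[OF ne(1)] d s] by simp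
  ultimately obtain F' where F': "is_focus (ellipse (f c + b - e') (f c + b + e') (2 * a')) F'"
      "F' \<in> (\<lambda>x. f x + b) ` closed_segment (c + e + s1 *\<^sub>R d) (c + e + s2 *\<^sub>R d)"
    using pres unfolding preserves_focal_chords_def img by blast
  then obtain s where "F' = f (c + e + s *\<^sub>R d) + b"
    unfolding closed_segment_along_line by blast
  then have "F' - (f c + b) = f e + s *\<^sub>R f d"
    by (simp add: linear_add[OF f] linear_scale[OF f])
  moreover have "F' - (f c + b) = e' \<or> F' - (f c + b) = - e'"
    using F'(1) is_focus_ellipse_iff[OF ne(2)] by auto
  ultimately show ?thesis
    by (metis cross2_add_scaleR_self cross2_minus_right power2_minus)
qed

lemma cross2_imp_preserves_focal_chords:
  fixes f :: "real^2 \<Rightarrow> real^2"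
  assumes ne: "norm e < a" "norm e' < a'" and f: "linear f" and fd: "f d \<noteq> 0"
    and img: "(\<lambda>x. f x + b) ` ellipse (c - e) (c + e) (2 * a) = ellipse (f c + b - e') (f c + b + e') (2 * a')"
    and cross: "(cross2 (f d) e')\<^sup>2 = (cross2 (f d) (f e))\<^sup>2"
  shows "preserves_focal_chords (\<lambda>x. f x + b) (ellipse (c - e) (c + e) (2 * a)) d"
  unfolding preserves_focal_chords_def
proof (intro allI impI, elim conjE exE)
  fix u v F t
  assume chord: "is_chord (ellipse (c - e) (c + e) (2 * a)) u v" and "v - u = t *\<^sub>R d"
    and "is_focus (ellipse (c - e) (c + e) (2 * a)) F" and "F \<in> closed_segment u v"
  then have focus: "F - c = e \<or> F - c = - e"
    using is_focus_ellipse_iff[OF ne(1)] by auto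
  obtain s1 s2 where s: "s1 \<noteq> s2" "u = F + s1 *\<^sub>R d" "v = F + s2 *\<^sub>R d"
    using point_of_chord_param \<open>F \<in> closed_segment u v\<close> \<open>v - u = t *\<^sub>R d\<close> chord
    unfolding is_chord_def by metis
  have "(cross2 (f d) (f (F - c)))\<^sup>2 = (cross2 (f d) e')\<^sup>2"
    using focus cross by (auto simp: linear_neg[OF f] cross2_minus_right)
  then obtain z \<kappa> where z: "z = e' \<or> z = - e'" "f (F - c) = z + \<kappa> *\<^sub>R f d"
    using cross2_sq_eq_imp_on_parallel[OF fd] by metis
  define c' where "c' = f c + b"
  have image: "f x + b = c' + z + (\<kappa> + s) *\<^sub>R f d" if "x = F + s *\<^sub>R d" for x s
  proof -
    have "f x + b = c' + f (F - c) + s *\<^sub>R f d"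
      by (simp add: that c'_def linear_add[OF f] linear_diff[OF f] linear_scale[OF f])
    then show ?thesis
      by (simp add: z(2) algebra_simps)
  qed
  have ends: "f u + b = c' + z + (\<kappa> + s1) *\<^sub>R f d" "f v + b = c' + z + (\<kappa> + s2) *\<^sub>R f d"
    using image s(2,3) by simp_all
  have "f u + b \<in> ellipse (c' - e') (c' + e') (2 * a')" "f v + b \<in> ellipse (c' - e') (c' + e') (2 * a')"
    using chord img by (auto simp: is_chord_def c'_def)
  then have "c' + z \<in> closed_segment (f u + b) (f v + b)"
    unfolding ends using interior_point_in_chord[OF ne(2) ellipse_quad_focus_less[OF ne(2) z(1)] fd] s(1)
    by simp
  moreover have "is_focus ((\<lambda>x. f x + b) ` ellipse (c - e) (c + e) (2 * a)) (c' + z)"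
    using z(1) is_focus_ellipse_iff[OF ne(2)] by (auto simp: img c'_def)
  ultimately show "\<exists>F'. is_focus ((\<lambda>x. f x + b) ` ellipse (c - e) (c + e) (2 * a)) F'
                     \<and> F' \<in> (\<lambda>x. f x + b) ` closed_segment u v"
    by (auto simp: closed_segment_affine_image[OF f, symmetric])
qed

lemma cross2_sq_focal_vector:
  "(cross2 w e)\<^sup>2 = ellipse_quad a e w - (a\<^sup>2 - e \<bullet> e) * (w \<bullet> w)"
  using cross2_sq_add_inner_sq[of w e] by (simp add: ellipse_quad_def algebra_simps)

lemma cross2_focal_condition_iff:
  assumes ne: "norm e < a" "norm e' < a'"
    and quad: "ellipse_quad a' e' w * ellipse_quad_det a e = ellipse_quad a e d * ellipse_quad_det a' e'"
    and cross: "(cross2 w y)\<^sup>2 * ellipse_quad_det a e = (cross2 d e)\<^sup>2 * ellipse_quad_det a' e'"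
  shows "(cross2 w e')\<^sup>2 = (cross2 w y)\<^sup>2 \<longleftrightarrow> a' * norm d = a * norm w"
proof -
  define \<beta> where "\<beta> = a\<^sup>2 - e \<bullet> e"
  define \<beta>' where "\<beta>' = a'\<^sup>2 - e' \<bullet> e'"
  have a: "a > 0" "a' > 0"
    using ne norm_ge_zero[of e] norm_ge_zero[of e'] by linarith+
  have \<beta>: "\<beta> > 0" "\<beta>' > 0"
    using norm_lt_imp_sq_inner_lt ne by (auto simp: \<beta>_def \<beta>'_def)
  have K: "ellipse_quad_det a e = a\<^sup>2 * \<beta>" "ellipse_quad_det a' e' = a'\<^sup>2 * \<beta>'"
    by (simp_all add: ellipse_quad_det_def \<beta>_def \<beta>'_def)
  have "(cross2 w e')\<^sup>2 = (cross2 w y)\<^sup>2 \<longleftrightarrow>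
          (cross2 w e')\<^sup>2 * ellipse_quad_det a e = (cross2 w y)\<^sup>2 * ellipse_quad_det a e"
    using ellipse_quad_det_pos[OF ne(1)] by simp
  also have "\<dots> \<longleftrightarrow> \<beta> * (d \<bullet> d) * (a'\<^sup>2 * \<beta>') = \<beta>' * (w \<bullet> w) * (a\<^sup>2 * \<beta>)"
    unfolding cross cross2_sq_focal_vector[of w e' a'] cross2_sq_focal_vector[of d e a]
      \<beta>_def [symmetric] \<beta>'_def [symmetric]
    using quad by (simp add: K algebra_simps)
  also have "\<dots> \<longleftrightarrow> (a' * norm d)\<^sup>2 = (a * norm w)\<^sup>2"
    using \<beta> by (simp add: power_mult_distrib power2_norm_eq_inner algebra_simps)
  also have "\<dots> \<longleftrightarrow> a' * norm d = a * norm w"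
    using a by (auto simp: power2_eq_iff_nonneg)
  finally show ?thesis .
qed

lemma preserves_focal_chords_iff:
  fixes f :: "real^2 \<Rightarrow> real^2"
  assumes ne: "norm e < a" "norm e' < a'" and f: "linear f" "bij f" and d: "d \<noteq> 0"
    and rel: "\<And>y. ellipse_quad a' e' (f y) * ellipse_quad_det a e = ellipse_quad a e y * ellipse_quad_det a' e'"
  shows "preserves_focal_chords (\<lambda>x. f x + b) (ellipse (c - e) (c + e) (2 * a)) d \<longleftrightarrow>
           a' * norm d = a * norm (f d)"
proof -
  have img: "(\<lambda>x. f x + b) ` ellipse (c - e) (c + e) (2 * a) = ellipse (f c + b - e') (f c + b + e') (2 * a')"
    using affine_image_ellipse[OF ne f rel] .
  have fd: "f d \<noteq> 0"
    using d f linear_0[OF f(1)] by (metis bij_def injD)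
  have "preserves_focal_chords (\<lambda>x. f x + b) (ellipse (c - e) (c + e) (2 * a)) d \<longleftrightarrow>
          (cross2 (f d) e')\<^sup>2 = (cross2 (f d) (f e))\<^sup>2"
    using preserves_focal_chords_imp_cross2[OF ne f(1) d img] cross2_imp_preserves_focal_chords[OF ne f(1) fd img]
    by blast
  also have "\<dots> \<longleftrightarrow> a' * norm d = a * norm (f d)"
    using cross2_focal_condition_iff[OF ne rel cross2_sq_linear_image[OF ne f(1) rel]] .
  finally show ?thesis .
qed

theorem proposition6:
  fixes E :: "(real^2) set" and p q :: "real^2" and g :: "real^2 \<Rightarrow> real^2"
  assumes "is_ellipse E"
    and "is_chord E p q"
    and "affine_bijection g"
  defines "P1 \<equiv> (\<forall>u v F. is_chord E u v \<and> (\<exists>t. v - u = t *\<^sub>R (q - p))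
                      \<and> is_focus E F \<and> F \<in> closed_segment u v
                  \<longrightarrow> (\<exists>F'. is_focus (g ` E) F' \<and> F' \<in> g ` closed_segment u v))"
    and "P2 \<equiv> dist (g p) (g q) = dist p q"
    and "P3 \<equiv> major_axis_length (g ` E) = major_axis_length E"
  shows "(P1 \<and> P2 \<longrightarrow> P3) \<and> (P1 \<and> P3 \<longrightarrow> P2) \<and> (P2 \<and> P3 \<longrightarrow> P1)"
proof -
  obtain c e a where ne: "norm e < a" and E: "E = ellipse (c - e) (c + e) (2 * a)"
    using is_ellipse_centered_form[OF assms(1)] by blast
  obtain f b where f: "linear f" "bij f" and g: "g = (\<lambda>x. f x + b)"
    using assms(3) unfolding affine_bijection_def by blast
  obtain e' a' where ne': "norm e' < a'" and
      rel: "\<And>y. ellipse_quad a' e' (f y) * ellipse_quad_det a e = ellipse_quad a e y * ellipse_quad_det a' e'"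
    using ellipse_quad_linear_pullback[OF ne f] by blast
  have d: "q - p \<noteq> 0"
    using assms(2) by (auto simp: is_chord_def)
  have "P1 \<longleftrightarrow> a' * norm (q - p) = a * norm (f (q - p))"
    using preserves_focal_chords_iff[OF ne ne' f d rel]
    by (simp add: P1_def preserves_focal_chords_def E g)
  moreover have "P2 \<longleftrightarrow> norm (f (q - p)) = norm (q - p)"
    by (simp add: P2_def g dist_norm linear_diff[OF f(1)] norm_minus_commute)
  moreover have "P3 \<longleftrightarrow> a' = a"
    using major_axis_length_ellipse[OF ne] major_axis_length_ellipse[OF ne']
    by (simp add: P3_def E g affine_image_ellipse[OF ne ne' f rel])
  moreover have "a > 0"
    using ne norm_ge_zero[of e] by linarith
  moreover have "norm (q - p) > 0"
    using d by simp
  ultimately show ?thesis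
    by auto
qed

end
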